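(* Let $t \geq 1$ and $p \geq 3$ be integers. Let $m_1, \dots, m_p$ be distinct real numbers and $c_1, \dots, c_p$ be distinct real numbers. For $i, j \in [p]$ let $L_{i,j}$ be the line $\{(x, m_i x + c_j) : x \in \mathbb{R}\} \subseteq \mathbb{R}^2$, and let $A_{i,j}$ be the set of points $(a,b) \in \mathbb{R}^2$ for which there exist $i', j' \in [p]$ with $(i',j') \neq (i,j)$ such that $L_{i,j}$ and $L_{i',j'}$ intersect at $(a,b)$. To each point $(a,b)$ in $\bigcup_{i,j} A_{i,j}$ assign a $t$-element set $T_{(a,b)}$, these sets being pairwise disjoint, and let $B_{i,j} = \bigcup_{(a,b) \in A_{i,j}} T_{(a,b)}$. Let $\mathcal{B} = \{B_{i,j} : i, j \in [p]\}$. Let $\mathcal{L}$ be a largest $t$-intersecting sub-family of $\mathcal{B}$, let $k \geq 1$ be an integer and let $\mathcal{A}_1, \dots, \mathcal{A}_k$ be cross-$t$-intersecting sub-families of $\mathcal{B}$. Then: (i) $\kappa(\mathcal{B},t) = |\mathcal{L}| = p$; (ii) if $k \geq \kappa(\mathcal{B},t)$ and $\mathcal{A}_1 = \dots = \mathcal{A}_k = \mathcal{L}$, then $\prod_{i=1}^k |\mathcal{A}_i|$ is maximum among all $k$-tuples of cross-$t$-intersecting sub-families of $\mathcal{B}$; (iii) if $k < \kappa(\mathcal{B},t)$ and $\mathcal{A}_1 = \dots = \mathcal{A}_k = \mathcal{L}$, then $\prod_{i=1}^k |\mathcal{A}_i|$ is not maximum among all $k$-tuples of cross-$t$-intersecting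 sub-families of $\mathcal{B}$.
   Context: $[p] = \{1,\dots,p\}$. A family $\mathcal{A}$ is $t$-intersecting if $|A \cap B| \geq t$ for all $A, B \in \mathcal{A}$ with $A \neq B$. Families $\mathcal{A}_1, \dots, \mathcal{A}_k$ (not necessarily distinct or non-empty) are cross-$t$-intersecting if for all $i \neq j$, $|A \cap B| \geq t$ for every $A \in \mathcal{A}_i$, $B \in \mathcal{A}_j$. $l(\mathcal{F},t)$ is the size of a largest $t$-intersecting sub-family of $\mathcal{F}$. For a family $\mathcal{A}$, $\mathcal{A}^{t,+} = \{A \in \mathcal{A} : |A \cap B| \geq t \text{ for all } B \in \mathcal{A}\setminus\{A\}\}$ and $\mathcal{A}^{t,-} = \mathcal{A} \setminus \mathcal{A}^{t,+}$. For $\mathcal{A} \subseteq \mathcal{F}$, $\beta(\mathcal{F},t,\mathcal{A}) = \frac{l(\mathcal{F},t) - |\mathcal{A}^{t,+}|}{|\mathcal{A}^{t,-}|}$ if $\mathcal{A}^{t,-} \neq \emptyset$, and $\frac{l(\mathcal{F},t)}{|\mathcal{F}|}$ otherwise; $\beta(\mathcal{F},t) = \min_{\mathcal{A} \subseteq \mathcal{F}} \beta(\mathcal{F},t,\mathcal{A})$ and $\kappa(\mathcal{F},t) = 1/\beta(\mathcal{F},t)$. *)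

theory Defs
  imports Complex_Main
begin

definition t_intersecting :: "nat \<Rightarrow> 'a set set \<Rightarrow> bool" where
  "t_intersecting t \<A> \<longleftrightarrow> (\<forall>A\<in>\<A>. \<forall>B\<in>\<A>. A \<noteq> B \<longrightarrow> t \<le> card (A \<inter> B))"

definition cross_t_intersecting :: "nat \<Rightarrow> nat \<Rightarrow> (nat \<Rightarrow> 'a set set) \<Rightarrow> bool" where
  "cross_t_intersecting t k As \<longleftrightarrow>
     (\<forall>i\<in>{1..k}. \<forall>j\<in>{1..k}. i \<noteq> j \<longrightarrow> (\<forall>A\<in>As i. \<forall>B\<in>As j. t \<le> card (A \<inter> B)))"

definition l_fam :: "'a set set \<Rightarrow> nat \<Rightarrow> nat" where
  "l_fam F t = Max {card \<A> | \<A>. \<A> \<subseteq> F \<and> t_intersecting t \<A>}"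

definition tplus :: "nat \<Rightarrow> 'a set set \<Rightarrow> 'a set set" where
  "tplus t \<A> = {A \<in> \<A>. \<forall>B \<in> \<A> - {A}. t \<le> card (A \<inter> B)}"

definition tminus :: "nat \<Rightarrow> 'a set set \<Rightarrow> 'a set set" where
  "tminus t \<A> = \<A> - tplus t \<A>"

definition beta_of :: "'a set set \<Rightarrow> nat \<Rightarrow> 'a set set \<Rightarrow> real" where
  "beta_of F t \<A> =
     (if tminus t \<A> \<noteq> {}
      then (real (l_fam F t) - real (card (tplus t \<A>))) / real (card (tminus t \<A>))
      else real (l_fam F t) / real (card F))"

definition beta :: "'a set set \<Rightarrow> nat \<Rightarrow> real" where
  "beta F t = Min {beta_of F t \<A> | \<A>. \<A> \<subseteq> F}"

definition kappa :: "'a set set \<Rightarrow> nat \<Rightarrow> real" where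
  "kappa F t = 1 / beta F t"

definition line_ij :: "(nat \<Rightarrow> real) \<Rightarrow> (nat \<Rightarrow> real) \<Rightarrow> nat \<Rightarrow> nat \<Rightarrow> (real \<times> real) set" where
  "line_ij m c i j = {(x, m i * x + c j) | x. True}"

definition pts_ij :: "nat \<Rightarrow> (nat \<Rightarrow> real) \<Rightarrow> (nat \<Rightarrow> real) \<Rightarrow> nat \<Rightarrow> nat \<Rightarrow> (real \<times> real) set" where
  "pts_ij p m c i j = {P. \<exists>i'\<in>{1..p}. \<exists>j'\<in>{1..p}. (i', j') \<noteq> (i, j) \<and>
        P \<in> line_ij m c i j \<inter> line_ij m c i' j'}"

definition B_ij :: "nat \<Rightarrow> (nat \<Rightarrow> real) \<Rightarrow> (nat \<Rightarrow> real) \<Rightarrow> (real \<times> real \<Rightarrow> 'a set) \<Rightarrow> nat \<Rightarrow> nat \<Rightarrow> 'a set" where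
  "B_ij p m c T i j = (\<Union>P \<in> pts_ij p m c i j. T P)"

definition B_fam :: "nat \<Rightarrow> (nat \<Rightarrow> real) \<Rightarrow> (nat \<Rightarrow> real) \<Rightarrow> (real \<times> real \<Rightarrow> 'a set) \<Rightarrow> 'a set set" where
  "B_fam p m c T = {B_ij p m c T i j | i j. i \<in> {1..p} \<and> j \<in> {1..p}}"

end

theory Submission
  imports Defs "HOL-Analysis.Convex"
begin

text \<open>
  Two sets \<open>B\<^sub>i\<^sub>,\<^sub>j\<close> and \<open>B\<^sub>i\<^sub>'\<^sub>,\<^sub>j\<^sub>'\<close> share exactly the \<open>t\<close> labels of the meeting point of
  their lines when the slopes differ, and nothing when the lines are parallel. So \<open>\<B>\<close> splits
  into \<open>p\<close> parallel classes of \<open>p\<close> sets each, and two distinct members are \<open>t\<close>-intersecting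
  iff they lie in different classes. A \<open>t\<close>-intersecting subfamily takes at most one set per
  class, whence \<open>l(\<B>,t) = p\<close>; the members of \<open>\<A>\<^sup>t\<^sup>,\<^sup>-\<close> lie in classes avoided by \<open>\<A>\<^sup>t\<^sup>,\<^sup>+\<close>, which
  gives \<open>\<beta>(\<B>,t) = 1/p\<close>.
  For \<open>k \<ge> p\<close> cross-\<open>t\<close>-intersecting families, each class contributes at most \<open>k\<close> to
  \<open>\<Sum>|\<A>\<^sub>i|\<close>: either a single family meets it, or every family meets it in the same single
  set. Hence \<open>\<Sum>|\<A>\<^sub>i| \<le> pk\<close> and AM-GM bounds the product by \<open>p\<^sup>k\<close>. For \<open>k < p\<close>, one family
  taking \<open>p - k + 1\<close> whole classes and each other family one further class beats \<open>p\<^sup>k\<close>.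
\<close>

lemma sum_card_le_if_cross_eq:
  assumes "finite I" "card I \<le> n" "\<And>i. i \<in> I \<Longrightarrow> card (R i) \<le> n"
    and cross: "\<And>i j x y. i \<in> I \<Longrightarrow> j \<in> I \<Longrightarrow> i \<noteq> j \<Longrightarrow> x \<in> R i \<Longrightarrow> y \<in> R j \<Longrightarrow> x = y"
  shows "(\<Sum>i\<in>I. card (R i)) \<le> n"
proof (cases "\<exists>i\<in>I. \<exists>j\<in>I. i \<noteq> j \<and> R i \<noteq> {} \<and> R j \<noteq> {}")
  case True
  have "card (R i) \<le> 1" if i: "i \<in> I" for i
  proof -
    obtain j y where "j \<in> I" "j \<noteq> i" "y \<in> R j" using True by blast
    then have "R i \<subseteq> {y}" using cross i by blast
    then show ?thesis using card_mono[of "{y}" "R i"] by simp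
  qed
  then have "(\<Sum>i\<in>I. card (R i)) \<le> card I" using sum_mono[of I "\<lambda>i. card (R i)" "\<lambda>_. 1"] by simp
  then show ?thesis using assms(2) by linarith
next
  case False
  show ?thesis
  proof (cases "\<exists>i\<in>I. R i \<noteq> {}")
    case True
    then obtain i where i: "i \<in> I" "R i \<noteq> {}" by blast
    have others_empty: "R j = {}" if "j \<in> I - {i}" for j using False i that by blast
    have "(\<Sum>i\<in>I. card (R i)) = card (R i) + (\<Sum>j\<in>I - {i}. card (R j))"
      using assms(1) i by (simp add: sum.remove)
    also have "\<dots> = card (R i)" using others_empty by simp
    finally show ?thesis using assms(3) i by simp
  qed simp
qed

lemma prod_le_power_if_sum_le:
  fixes x :: "'b \<Rightarrow> nat"
  assumes "finite I" "I \<noteq> {}" "(\<Sum>i\<in>I. x i) \<le> n * card I"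
  shows "(\<Prod>i\<in>I. x i) \<le> n ^ card I"
proof -
  define P where "P = (\<Prod>i\<in>I. real (x i))"
  have I0: "card I > 0" using assms(1,2) by (simp add: card_gt_0_iff)
  have "P powr (1 / card I) \<le> (\<Sum>i\<in>I. real (x i) / card I)"
    unfolding P_def by (rule arith_geom_mean) (use assms in auto)
  also have "\<dots> = (\<Sum>i\<in>I. real (x i)) / card I" by (simp add: sum_divide_distrib)
  also have "\<dots> \<le> n" using assms(3) I0 by (simp add: divide_le_eq flip: of_nat_sum of_nat_mult)
  finally have root: "P powr (1 / card I) \<le> n" .
  have "P = (P powr (1 / card I)) powr card I"
    using I0 by (simp add: P_def powr_powr prod_nonneg)
  also have "\<dots> \<le> real n powr card I" by (rule powr_mono2) (use root in auto)
  also have "\<dots> \<le> real n ^ card I" by (cases "n = 0") (simp_all add: powr_realpow)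
  finally show ?thesis unfolding P_def by (simp flip: of_nat_prod of_nat_power)
qed

lemma t_intersecting_tplus: "t_intersecting t (tplus t A)"
  unfolding t_intersecting_def tplus_def by blast

locale parallel_classes =
  fixes F :: "'a set set" and cls :: "'a set \<Rightarrow> nat" and p t :: nat
  assumes p_pos: "0 < p"
    and cls_range: "\<And>X. X \<in> F \<Longrightarrow> cls X \<in> {1..p}"
    and card_class: "\<And>s. s \<in> {1..p} \<Longrightarrow> card {X\<in>F. cls X = s} = p"
    and t_le_card_Int_iff:
      "\<And>X Y. X \<in> F \<Longrightarrow> Y \<in> F \<Longrightarrow> X \<noteq> Y \<Longrightarrow> t \<le> card (X \<inter> Y) \<longleftrightarrow> cls X \<noteq> cls Y"
begin

lemma finite_F: "finite F"
proof (rule finite_subset)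
  show "F \<subseteq> (\<Union>s\<in>{1..p}. {X\<in>F. cls X = s})" using cls_range by blast
  have "finite {X\<in>F. cls X = s}" if "s \<in> {1..p}" for s
    using card_class[OF that] p_pos by (intro card_ge_0_finite) simp
  then show "finite (\<Union>s\<in>{1..p}. {X\<in>F. cls X = s})" by blast
qed

lemma card_classes: "U \<subseteq> {1..p} \<Longrightarrow> card {X\<in>F. cls X \<in> U} = p * card U"
proof -
  assume U: "U \<subseteq> {1..p}"
  then have "finite U" by (rule finite_subset) simp
  have "{X\<in>F. cls X \<in> U} = (\<Union>s\<in>U. {X\<in>F. cls X = s})" by blast
  also have "card \<dots> = (\<Sum>s\<in>U. card {X\<in>F. cls X = s})"
    by (rule card_UN_disjoint) (use \<open>finite U\<close> finite_F in auto)
  also have "\<dots> = (\<Sum>s\<in>U. p)" using card_class U by (intro sum.cong) auto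
  finally show ?thesis by simp
qed

lemma card_F: "card F = p * p"
proof -
  have "{X\<in>F. cls X \<in> {1..p}} = F" using cls_range by blast
  then show ?thesis using card_classes[of "{1..p}"] by simp
qed

lemma card_eq_sum_classes:
  assumes "A \<subseteq> F" shows "card A = (\<Sum>s=1..p. card {X\<in>A. cls X = s})"
proof -
  have "finite A" using assms finite_F by (rule finite_subset)
  have "A = (\<Union>s\<in>{1..p}. {X\<in>A. cls X = s})" using assms cls_range by blast
  also have "card \<dots> = (\<Sum>s=1..p. card {X\<in>A. cls X = s})"
    by (rule card_UN_disjoint) (use \<open>finite A\<close> in auto)
  finally show ?thesis .
qed

lemma eq_if_same_class: "X \<in> F \<Longrightarrow> Y \<in> F \<Longrightarrow> cls X = cls Y \<Longrightarrow> t \<le> card (X \<inter> Y) \<Longrightarrow> X = Y"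
  using t_le_card_Int_iff by blast

lemma inj_on_cls: "A \<subseteq> F \<Longrightarrow> t_intersecting t A \<Longrightarrow> inj_on cls A"
  unfolding t_intersecting_def using eq_if_same_class by (meson inj_onI subsetD)

lemma card_t_intersecting_le:
  assumes "A \<subseteq> F" "t_intersecting t A" shows "card A \<le> p"
proof -
  have "cls ` A \<subseteq> {1..p}" using assms(1) cls_range by blast
  then show ?thesis using card_inj_on_le[OF inj_on_cls[OF assms], of "{1..p}"] by simp
qed

lemma ex_t_intersecting_card: "\<exists>A\<subseteq>F. t_intersecting t A \<and> card A = p"
proof -
  have "\<exists>X. X \<in> F \<and> cls X = s" if "s \<in> {1..p}" for s
    using card_class[OF that] p_pos by (metis (mono_tags, lifting) Collect_empty_eq card.empty less_irrefl)
  then obtain rep where rep: "\<And>s. s \<in> {1..p} \<Longrightarrow> rep s \<in> F \<and> cls (rep s) = s" by metis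
  then have "inj_on rep {1..p}" by (metis inj_onI)
  moreover have "t_intersecting t (rep ` {1..p})"
    unfolding t_intersecting_def using rep t_le_card_Int_iff by auto
  ultimately show ?thesis using rep by (intro exI[of _ "rep ` {1..p}"]) (auto simp: card_image)
qed

lemma l_fam_eq: "l_fam F t = p"
  unfolding l_fam_def
proof (rule Max_eqI)
  show "finite {card A |A. A \<subseteq> F \<and> t_intersecting t A}"
    by (rule finite_subset[of _ "card ` Pow F"]) (use finite_F in auto)
qed (use card_t_intersecting_le ex_t_intersecting_card in auto)

lemma card_tminus_le:
  assumes "A \<subseteq> F" shows "card (tminus t A) \<le> p * (p - card (tplus t A))"
proof -
  let ?S = "cls ` tplus t A"
  have plus: "tplus t A \<subseteq> F" using assms unfolding tplus_def by blast
  have S: "?S \<subseteq> {1..p}" using plus cls_range by blast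
  have "card ?S = card (tplus t A)" by (rule card_image[OF inj_on_cls[OF plus t_intersecting_tplus]])
  then have free_classes: "card ({1..p} - ?S) = p - card (tplus t A)"
    using card_Diff_subset[OF finite_subset[OF S finite_atLeastAtMost] S] by simp
  have "X \<in> {X\<in>F. cls X \<in> {1..p} - ?S}" if X: "X \<in> tminus t A" for X
  proof -
    have XA: "X \<in> A" "X \<notin> tplus t A" using X unfolding tminus_def by auto
    then have XF: "X \<in> F" using assms by blast
    have "Y = X" if Y: "Y \<in> tplus t A" "cls X = cls Y" for Y
    proof (rule ccontr)
      assume "Y \<noteq> X"
      then have "t \<le> card (Y \<inter> X)" using Y(1) XA(1) unfolding tplus_def by blast
      then show False using eq_if_same_class[OF _ XF Y(2)[symmetric]] Y(1) plus \<open>Y \<noteq> X\<close> by blast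
    qed
    then have "cls X \<notin> ?S" using XA(2) by blast
    then show ?thesis using XF cls_range by simp
  qed
  then have "card (tminus t A) \<le> card {X\<in>F. cls X \<in> {1..p} - ?S}"
    using finite_F by (intro card_mono) auto
  also have "\<dots> = p * card ({1..p} - ?S)" by (rule card_classes) blast
  also have "\<dots> = p * (p - card (tplus t A))" using free_classes by simp
  finally show ?thesis .
qed

lemma beta_of_ge: assumes "A \<subseteq> F" shows "1 / real p \<le> beta_of F t A"
proof (cases "tminus t A = {}")
  case True
  then show ?thesis unfolding beta_of_def using l_fam_eq card_F p_pos by simp
next
  case False
  define a b where "a = card (tplus t A)" and "b = card (tminus t A)"
  have "finite (tminus t A)" using assms finite_F unfolding tminus_def by (meson Diff_subset finite_subset)
  then have "0 < b" using False unfolding b_def by (simp add: card_gt_0_iff)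
  have "tplus t A \<subseteq> F" using assms unfolding tplus_def by blast
  then have "a \<le> p" unfolding a_def using t_intersecting_tplus by (rule card_t_intersecting_le)
  have "real b \<le> real (p * (p - a))"
    using card_tminus_le[OF assms] unfolding a_def b_def by (simp only: of_nat_le_iff)
  also have "\<dots> = real p * (real p - real a)" using \<open>a \<le> p\<close> by (simp add: of_nat_diff)
  finally have "1 / real p \<le> (real p - real a) / real b"
    using \<open>0 < b\<close> p_pos by (simp add: divide_simps mult.commute)
  then show ?thesis unfolding beta_of_def a_def b_def using False l_fam_eq by simp
qed

lemma kappa_eq: "kappa F t = p"
proof -
  have "beta F t = 1 / real p"
    unfolding beta_def
  proof (rule Min_eqI)
    show "finite {beta_of F t A |A. A \<subseteq> F}"
      by (rule finite_subset[of _ "beta_of F t ` Pow F"]) (use finite_F in auto)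
    have "beta_of F t {} = 1 / real p"
      unfolding beta_of_def tminus_def tplus_def using l_fam_eq card_F p_pos by simp
    then show "1 / real p \<in> {beta_of F t A |A. A \<subseteq> F}" by force
  qed (use beta_of_ge in blast)
  then show ?thesis unfolding kappa_def by simp
qed

lemma sum_card_cross_le:
  assumes "p \<le> k" "\<forall>i\<in>{1..k}. Cs i \<subseteq> F" "cross_t_intersecting t k Cs"
  shows "(\<Sum>i=1..k. card (Cs i)) \<le> p * k"
proof -
  have class_sum: "(\<Sum>i=1..k. card {X\<in>Cs i. cls X = s}) \<le> k" if s: "s \<in> {1..p}" for s
  proof (rule sum_card_le_if_cross_eq)
    show "card {X\<in>Cs i. cls X = s} \<le> k" if "i \<in> {1..k}" for i
    proof -
      have "card {X\<in>Cs i. cls X = s} \<le> card {X\<in>F. cls X = s}"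
        using assms(2) that finite_F by (intro card_mono) auto
      then show ?thesis using card_class[OF s] assms(1) by simp
    qed
    show "x = y" if "i \<in> {1..k}" "j \<in> {1..k}" "i \<noteq> j"
      "x \<in> {X\<in>Cs i. cls X = s}" "y \<in> {X\<in>Cs j. cls X = s}" for i j x y
    proof -
      have "x \<in> F" "y \<in> F" "cls x = cls y" using that assms(2) by auto
      moreover have "t \<le> card (x \<inter> y)"
        using that assms(3) unfolding cross_t_intersecting_def by blast
      ultimately show ?thesis by (rule eq_if_same_class)
    qed
  qed simp_all
  have "(\<Sum>i=1..k. card (Cs i)) = (\<Sum>i=1..k. \<Sum>s=1..p. card {X\<in>Cs i. cls X = s})"
    using card_eq_sum_classes assms(2) by simp
  also have "\<dots> = (\<Sum>s=1..p. \<Sum>i=1..k. card {X\<in>Cs i. cls X = s})" by (rule sum.swap)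
  also have "\<dots> \<le> (\<Sum>s=1..p. k)" by (intro sum_mono class_sum)
  finally show ?thesis by simp
qed

lemma prod_card_cross_le:
  assumes "p \<le> k" "\<forall>i\<in>{1..k}. Cs i \<subseteq> F" "cross_t_intersecting t k Cs"
  shows "(\<Prod>i=1..k. card (Cs i)) \<le> p ^ k"
  using prod_le_power_if_sum_le[of "{1..k}"] sum_card_cross_le[OF assms] assms(1) p_pos
  by (simp add: mult.commute)

lemma ex_cross_prod_gt:
  assumes "1 \<le> k" "k < p"
  shows "\<exists>Cs. (\<forall>i\<in>{1..k}. Cs i \<subseteq> F) \<and> cross_t_intersecting t k Cs \<and> p ^ k < (\<Prod>i=1..k. card (Cs i))"
proof -
  define S where "S l = (if l = 1 then {1..p-k+1} else {p-k+l})" for l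
  define Cs where "Cs l = {X\<in>F. cls X \<in> S l}" for l
  have cross: "cross_t_intersecting t k Cs"
    unfolding cross_t_intersecting_def
  proof (intro ballI impI)
    fix i j X Y assume "i \<in> {1..k}" "j \<in> {1..k}" "i \<noteq> j" "X \<in> Cs i" "Y \<in> Cs j"
    then have "X \<in> F" "Y \<in> F" "cls X \<noteq> cls Y"
      using assms unfolding Cs_def S_def by (auto split: if_splits)
    then show "t \<le> card (X \<inter> Y)" using t_le_card_Int_iff by blast
  qed
  have card_Cs: "card (Cs l) = p * card (S l)" if "l \<in> {1..k}" for l
  proof -
    have "S l \<subseteq> {1..p}" using that assms by (auto simp: S_def)
    then show ?thesis unfolding Cs_def by (rule card_classes)
  qed
  have "(\<Prod>i\<in>{1..k}-{1}. card (Cs i)) = (\<Prod>i\<in>{1..k}-{1}. p)"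
    using card_Cs by (intro prod.cong) (auto simp: S_def)
  then have rest: "(\<Prod>i\<in>{1..k}-{1}. card (Cs i)) = p ^ (k - 1)" using assms by simp
  have "p ^ k = p * p ^ (k - 1)" using assms by (cases k) simp_all
  also have "\<dots> < p * (p - k + 1) * p ^ (k - 1)" using assms by simp
  also have "\<dots> = card (Cs 1) * (\<Prod>i\<in>{1..k}-{1}. card (Cs i))"
    using card_Cs[of 1] rest assms by (simp add: S_def)
  also have "\<dots> = (\<Prod>i=1..k. card (Cs i))" by (rule prod.remove[symmetric]) (use assms in auto)
  finally have "p ^ k < (\<Prod>i=1..k. card (Cs i))" .
  moreover have "\<forall>i\<in>{1..k}. Cs i \<subseteq> F" unfolding Cs_def by blast
  ultimately show ?thesis using cross by blast
qed

end

definition line_meet :: "(nat \<Rightarrow> real) \<Rightarrow> (nat \<Rightarrow> real) \<Rightarrow> nat \<Rightarrow> nat \<Rightarrow> nat \<Rightarrow> nat \<Rightarrow> real \<times> real" where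
  "line_meet m c i j i' j' = ((c j' - c j) / (m i - m i'), m i * ((c j' - c j) / (m i - m i')) + c j)"

lemma line_ij_Int_line_ij:
  assumes "m i \<noteq> m i'"
  shows "line_ij m c i j \<inter> line_ij m c i' j' = {line_meet m c i j i' j'}"
proof -
  define x0 where "x0 = (c j' - c j) / (m i - m i')"
  have meet: "m i * x + c j = m i' * x + c j' \<longleftrightarrow> x = x0" for x
    using assms unfolding x0_def by (auto simp: field_simps)
  have "line_meet m c i j i' j' = (x0, m i * x0 + c j)" unfolding line_meet_def x0_def ..
  then show ?thesis unfolding line_ij_def using meet by auto
qed

lemma line_ij_parallel_disjoint: "c j \<noteq> c j' \<Longrightarrow> line_ij m c i j \<inter> line_ij m c i j' = {}"
  unfolding line_ij_def by auto

locale line_grid =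
  fixes p t :: nat and m c :: "nat \<Rightarrow> real" and T :: "real \<times> real \<Rightarrow> 'a set"
  assumes t_pos: "t \<ge> 1" and p_ge_3: "p \<ge> 3"
    and inj_m: "inj_on m {1..p}" and inj_c: "inj_on c {1..p}"
    and labels_card: "\<forall>P \<in> (\<Union>i\<in>{1..p}. \<Union>j\<in>{1..p}. pts_ij p m c i j). finite (T P) \<and> card (T P) = t"
    and labels_disjoint: "\<forall>P \<in> (\<Union>i\<in>{1..p}. \<Union>j\<in>{1..p}. pts_ij p m c i j).
           \<forall>Q \<in> (\<Union>i\<in>{1..p}. \<Union>j\<in>{1..p}. pts_ij p m c i j). P \<noteq> Q \<longrightarrow> T P \<inter> T Q = {}"
begin

abbreviation "idx \<equiv> {1..p} \<times> {1..p}"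
abbreviation "B \<equiv> \<lambda>(i, j). B_ij p m c T i j"

lemma card_T: "(i, j) \<in> idx \<Longrightarrow> P \<in> pts_ij p m c i j \<Longrightarrow> finite (T P) \<and> card (T P) = t"
  using labels_card by blast

lemma T_disjoint:
  "(i, j) \<in> idx \<Longrightarrow> (i', j') \<in> idx \<Longrightarrow> P \<in> pts_ij p m c i j \<Longrightarrow> Q \<in> pts_ij p m c i' j' \<Longrightarrow>
    P \<noteq> Q \<Longrightarrow> T P \<inter> T Q = {}"
  using labels_disjoint by blast

lemma slope_neq: "i \<in> {1..p} \<Longrightarrow> i' \<in> {1..p} \<Longrightarrow> i \<noteq> i' \<Longrightarrow> m i \<noteq> m i'"
  using inj_m by (meson inj_on_contraD)

lemma intercept_neq: "j \<in> {1..p} \<Longrightarrow> j' \<in> {1..p} \<Longrightarrow> j \<noteq> j' \<Longrightarrow> c j \<noteq> c j'"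
  using inj_c by (meson inj_on_contraD)

lemma line_meet_in_pts:
  assumes "(i, j) \<in> idx" "(i', j') \<in> idx" "i \<noteq> i'"
  shows "line_meet m c i j i' j' \<in> pts_ij p m c i j \<inter> pts_ij p m c i' j'"
proof -
  have "line_meet m c i j i' j' \<in> line_ij m c i j \<inter> line_ij m c i' j'"
    using line_ij_Int_line_ij[of m i i' c j j'] slope_neq[of i i'] assms by auto
  moreover have "(i', j') \<noteq> (i, j)" "(i, j) \<noteq> (i', j')" using assms(3) by simp_all
  moreover have "i \<in> {1..p}" "j \<in> {1..p}" "i' \<in> {1..p}" "j' \<in> {1..p}" using assms(1,2) by auto
  ultimately show ?thesis unfolding pts_ij_def by blast
qed

lemma B_ij_Int_eq:
  assumes "(i, j) \<in> idx" "(i', j') \<in> idx"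
  shows "B_ij p m c T i j \<inter> B_ij p m c T i' j' =
    (\<Union>P \<in> pts_ij p m c i j \<inter> pts_ij p m c i' j'. T P)"
proof -
  have "x \<in> T P \<Longrightarrow> x \<in> T Q \<Longrightarrow> P = Q"
    if "P \<in> pts_ij p m c i j" "Q \<in> pts_ij p m c i' j'" for x P Q
    using T_disjoint[OF assms that] by blast
  then show ?thesis unfolding B_ij_def by blast
qed

lemma B_ij_Int_nonparallel:
  assumes "(i, j) \<in> idx" "(i', j') \<in> idx" "i \<noteq> i'"
  shows "B_ij p m c T i j \<inter> B_ij p m c T i' j' = T (line_meet m c i j i' j')"
proof -
  have "pts_ij p m c i j \<inter> pts_ij p m c i' j' \<subseteq> line_ij m c i j \<inter> line_ij m c i' j'"
    unfolding pts_ij_def by blast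
  also have "\<dots> = {line_meet m c i j i' j'}" using line_ij_Int_line_ij[of m i i' c j j'] slope_neq[of i i'] assms by auto
  finally have "pts_ij p m c i j \<inter> pts_ij p m c i' j' = {line_meet m c i j i' j'}"
    using line_meet_in_pts[OF assms] by blast
  then show ?thesis using B_ij_Int_eq[OF assms(1,2)] by simp
qed

lemma B_ij_Int_parallel:
  assumes "(i, j) \<in> idx" "(i, j') \<in> idx" "j \<noteq> j'"
  shows "B_ij p m c T i j \<inter> B_ij p m c T i j' = {}"
proof -
  have "pts_ij p m c i j \<inter> pts_ij p m c i j' \<subseteq> line_ij m c i j \<inter> line_ij m c i j'"
    unfolding pts_ij_def by blast
  also have "\<dots> = {}" using line_ij_parallel_disjoint[of c j j' m i] intercept_neq[of j j'] assms by auto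
  finally show ?thesis using B_ij_Int_eq[OF assms(1,2)] by simp
qed

lemma card_B_ij_Int_nonparallel:
  assumes "(i, j) \<in> idx" "(i', j') \<in> idx" "i \<noteq> i'"
  shows "card (B_ij p m c T i j \<inter> B_ij p m c T i' j') = t"
  using B_ij_Int_nonparallel[OF assms] line_meet_in_pts[OF assms] card_T[OF assms(1)] by simp

lemma finite_pts_ij:
  assumes "(i, j) \<in> idx" shows "finite (pts_ij p m c i j)"
proof -
  have "pts_ij p m c i j \<subseteq> (\<lambda>(i', j'). line_meet m c i j i' j') ` idx"
  proof
    fix P assume "P \<in> pts_ij p m c i j"
    then obtain i' j' where w: "(i', j') \<in> idx" "(i', j') \<noteq> (i, j)"
      "P \<in> line_ij m c i j \<inter> line_ij m c i' j'" unfolding pts_ij_def by blast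
    have "i \<noteq> i'"
    proof
      assume "i = i'"
      then have "c j \<noteq> c j'" using w intercept_neq assms by auto
      then show False using line_ij_parallel_disjoint[of c j j' m i] w \<open>i = i'\<close> by auto
    qed
    then have "P = line_meet m c i j i' j'" using line_ij_Int_line_ij[of m i i' c j j'] slope_neq[of i i'] w assms by auto
    then show "P \<in> (\<lambda>(i', j'). line_meet m c i j i' j') ` idx" using w(1) by force
  qed
  then show ?thesis by (rule finite_subset) simp
qed

text \<open>Any line meets the lines \<open>L\<^sub>i\<^sub>'\<^sub>,\<^sub>1\<close> and \<open>L\<^sub>i\<^sub>'\<^sub>,\<^sub>2\<close> of another slope in two distinct points.\<close>
lemma card_B_ij_ge:
  assumes ij: "(i, j) \<in> idx" shows "2 * t \<le> card (B_ij p m c T i j)"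
proof -
  define i' where "i' = (if i = 1 then 2 else 1::nat)"
  have i': "(i', 1) \<in> idx" "(i', 2) \<in> idx" "i \<noteq> i'" using p_ge_3 unfolding i'_def by auto
  define P1 P2 where "P1 = line_meet m c i j i' 1" and "P2 = line_meet m c i j i' 2"
  have P: "P1 \<in> pts_ij p m c i j" "P2 \<in> pts_ij p m c i j"
    using line_meet_in_pts[OF ij i'(1,3)] line_meet_in_pts[OF ij i'(2,3)] unfolding P1_def P2_def by auto
  have "m i \<noteq> m i'" "c 1 \<noteq> c 2" using slope_neq intercept_neq ij i' p_ge_3 by auto
  then have "P1 \<noteq> P2" unfolding P1_def P2_def line_meet_def by (auto simp: divide_cancel_right)
  then have "card (T P1 \<union> T P2) = 2 * t"
    using T_disjoint[OF ij ij P] card_T[OF ij P(1)] card_T[OF ij P(2)]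
    by (subst card_Un_disjoint) auto
  moreover have "T P1 \<union> T P2 \<subseteq> B_ij p m c T i j" unfolding B_ij_def using P by blast
  moreover have "finite (B_ij p m c T i j)"
    unfolding B_ij_def using finite_pts_ij[OF ij] card_T[OF ij] by blast
  ultimately show ?thesis by (metis card_mono)
qed

lemma inj_on_B: "inj_on B idx"
proof (rule inj_onI)
  fix x y assume x: "x \<in> idx" and y: "y \<in> idx" and eq: "B x = B y"
  obtain i j i' j' where xy: "x = (i, j)" "y = (i', j')" by fastforce
  show "x = y"
  proof (rule ccontr)
    assume "x \<noteq> y"
    have "card (B x) \<le> t"
    proof (cases "i = i'")
      case True
      then show ?thesis using B_ij_Int_parallel[of i j j'] x y xy eq \<open>x \<noteq> y\<close> by simp
    next
      case False
      then show ?thesis using card_B_ij_Int_nonparallel[of i j i' j'] x y xy eq by simp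
    qed
    then show False using card_B_ij_ge[of i j] x xy t_pos by simp
  qed
qed

lemma B_fam_eq_image: "B_fam p m c T = B ` idx"
  unfolding B_fam_def by fastforce

definition slope_index :: "'a set \<Rightarrow> nat" where
  "slope_index X = fst (inv_into idx B X)"

lemma slope_index_B: "x \<in> idx \<Longrightarrow> slope_index (B x) = fst x"
  unfolding slope_index_def using inj_on_B by simp

lemma parallel_classes_B_fam: "parallel_classes (B_fam p m c T) slope_index p t"
proof
  show "0 < p" using p_ge_3 by simp
  show "slope_index X \<in> {1..p}" if "X \<in> B_fam p m c T" for X
    using that slope_index_B unfolding B_fam_eq_image by force
  show "card {X \<in> B_fam p m c T. slope_index X = s} = p" if s: "s \<in> {1..p}" for s
  proof -
    have "{X \<in> B_fam p m c T. slope_index X = s} = B ` ({s} \<times> {1..p})"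
      unfolding B_fam_eq_image using slope_index_B s by force
    moreover have "inj_on B ({s} \<times> {1..p})" by (rule inj_on_subset[OF inj_on_B]) (use s in auto)
    ultimately show ?thesis by (simp add: card_image card_cartesian_product)
  qed
  show "t \<le> card (X \<inter> Y) \<longleftrightarrow> slope_index X \<noteq> slope_index Y"
    if XY: "X \<in> B_fam p m c T" "Y \<in> B_fam p m c T" "X \<noteq> Y" for X Y
  proof -
    obtain i j i' j' where ij: "(i, j) \<in> idx" "(i', j') \<in> idx"
      and X: "X = B_ij p m c T i j" and Y: "Y = B_ij p m c T i' j'"
      using XY(1,2) unfolding B_fam_def by blast
    have "slope_index X = i" "slope_index Y = i'" using slope_index_B ij X Y by force+
    moreover have "X \<inter> Y = {}" if "i = i'"
      using B_ij_Int_parallel[of i j j'] that ij X Y \<open>X \<noteq> Y\<close> by auto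
    ultimately show ?thesis
      using card_B_ij_Int_nonparallel[OF ij] X Y t_pos by (cases "i = i'") auto
  qed
qed

end

theorem theorem5p4:
  fixes t p k :: nat
    and m c :: "nat \<Rightarrow> real"
    and T :: "real \<times> real \<Rightarrow> 'a set"
    and L :: "'a set set"
    and As :: "nat \<Rightarrow> 'a set set"
  assumes "t \<ge> 1" and "p \<ge> 3"
    and "inj_on m {1..p}" and "inj_on c {1..p}"
    and "\<forall>P \<in> (\<Union>i\<in>{1..p}. \<Union>j\<in>{1..p}. pts_ij p m c i j). finite (T P) \<and> card (T P) = t"
    and "\<forall>P \<in> (\<Union>i\<in>{1..p}. \<Union>j\<in>{1..p}. pts_ij p m c i j).
           \<forall>Q \<in> (\<Union>i\<in>{1..p}. \<Union>j\<in>{1..p}. pts_ij p m c i j). P \<noteq> Q \<longrightarrow> T P \<inter> T Q = {}"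
    and "L \<subseteq> B_fam p m c T" and "t_intersecting t L"
    and "card L = l_fam (B_fam p m c T) t"
    and "k \<ge> 1"
    and "\<forall>i\<in>{1..k}. As i \<subseteq> B_fam p m c T"
    and "cross_t_intersecting t k As"
  shows "(kappa (B_fam p m c T) t = real (card L) \<and> card L = p) \<and>
         (real k \<ge> kappa (B_fam p m c T) t \<and> (\<forall>i\<in>{1..k}. As i = L) \<longrightarrow>
           (\<forall>Cs. (\<forall>i\<in>{1..k}. Cs i \<subseteq> B_fam p m c T) \<and> cross_t_intersecting t k Cs \<longrightarrow>
                 (\<Prod>i=1..k. card (Cs i)) \<le> (\<Prod>i=1..k. card (As i)))) \<and>
         (real k < kappa (B_fam p m c T) t \<and> (\<forall>i\<in>{1..k}. As i = L) \<longrightarrow>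
           (\<exists>Cs. (\<forall>i\<in>{1..k}. Cs i \<subseteq> B_fam p m c T) \<and> cross_t_intersecting t k Cs \<and>
                 (\<Prod>i=1..k. card (Cs i)) > (\<Prod>i=1..k. card (As i))))"
proof -
  interpret line_grid p t m c T using assms(1-6) by unfold_locales
  interpret parallel_classes "B_fam p m c T" slope_index p t by (rule parallel_classes_B_fam)
  have card_L: "card L = p" using assms(9) l_fam_eq by simp
  have "(\<Prod>i=1..k. card (As i)) = p ^ k" if "\<forall>i\<in>{1..k}. As i = L"
    using that card_L by simp
  then show ?thesis
    using kappa_eq card_L prod_card_cross_le ex_cross_prod_gt[OF assms(10)] by auto
qed

end
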